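(* Let $V$ be a real vector space with $m=\dim V>1$, and let $A\subset V$ be a finite set spanning $V$ with $0\notin A$ and no two elements of $A$ parallel. Let $B\subset A$ be a basis of $V$ such that the graph $G(B;A)$ is connected. Then there is a compact convex polytope $C\subset V$ with nonempty interior such that (with normals taken with respect to $[\cdot,\cdot]_B$): (i) the normal of each face of $C$ is an element of $A$; (ii) there is a vertex $v$ of $C$ lying at the intersection of exactly $m$ faces of $C$, each of which is normal to some element of $B$; (iii) $v$ is the unique vertex of $C$ with property (ii).
   Context: $[\cdot,\cdot]_B$ is the inner product on $V$ for which $B$ is orthonormal. $G(B;A)$ is the graph with vertex set $B$ and an edge between distinct $x,y\in B$ whenever there is $z\in A\setminus B$ with $[x,z]_B\ne0$ and $[y,z]_B\ne0$. Faces of $C$ are its $(m-1)$-dimensional faces. *)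

theory Defs
  imports "HOL-Analysis.Analysis"
begin

text \<open>The inner product [x,y]_B for which the basis B is orthonormal:
  sum over b in B of the products of the B-coordinates of x and y.\<close>
definition inner_B :: "'a::euclidean_space set \<Rightarrow> 'a \<Rightarrow> 'a \<Rightarrow> real" where
  "inner_B B x y = (\<Sum>b\<in>B. representation B x b * representation B y b)"

definition G_edge :: "'a::euclidean_space set \<Rightarrow> 'a set \<Rightarrow> 'a \<Rightarrow> 'a \<Rightarrow> bool" where
  "G_edge B A x y \<longleftrightarrow> x \<in> B \<and> y \<in> B \<and> x \<noteq> y \<and>
     (\<exists>z\<in>A - B. inner_B B x z \<noteq> 0 \<and> inner_B B y z \<noteq> 0)"

definition G_connected :: "'a::euclidean_space set \<Rightarrow> 'a set \<Rightarrow> bool" where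
  "G_connected B A \<longleftrightarrow> (\<forall>x\<in>B. \<forall>y\<in>B. (G_edge B A)\<^sup>*\<^sup>* x y)"

text \<open>A face (facet) F is normal to a w.r.t. [.,.]_B: F lies in a hyperplane
  {x. [a,x]_B = c} (orientation of the normal is not fixed).\<close>
definition normal_to :: "'a::euclidean_space set \<Rightarrow> 'a set \<Rightarrow> 'a \<Rightarrow> bool" where
  "normal_to B F a \<longleftrightarrow> a \<noteq> 0 \<and> (\<exists>c. F \<subseteq> {x. inner_B B a x = c})"

definition no_two_parallel :: "'a::real_vector set \<Rightarrow> bool" where
  "no_two_parallel A \<longleftrightarrow> (\<forall>x\<in>A. \<forall>y\<in>A. x \<noteq> y \<longrightarrow> \<not> (\<exists>c::real. y = c *\<^sub>R x))"

definition good_vertex :: "'a::euclidean_space set \<Rightarrow> 'a set \<Rightarrow> 'a \<Rightarrow> bool" where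
  "good_vertex B C v \<longleftrightarrow> v extreme_point_of C \<and>
     card {F. F facet_of C \<and> v \<in> F} = DIM('a) \<and>
     (\<forall>F. F facet_of C \<and> v \<in> F \<longrightarrow> (\<exists>b\<in>B. normal_to B F b))"

end

theory Submission
  imports Defs
begin

text \<open>Choose weights t_b > 0 and let C be cut out by 0 \<le> x_b \<le> t_b, where x_b are the
  B-coordinates, and by |[z, x]_B| \<le> 1/2 for z \<in> A - B. Near the origin only the coordinate
  constraints can be tight, so the facets through 0 are exactly the m coordinate facets and 0 has
  property (ii). As no two elements of A are parallel, a facet normal to b \<in> B is one of the
  two box facets x_b = 0 and x_b = t_b, so a vertex with property (ii) has every coordinate in
  {0, t_b}. The weights are chosen generic: every nonempty S \<subseteq> B contains some b such that
  |\<Sum>x\<in>S. z_x t_x| \<ge> 1 whenever z_b \<noteq> 0. Connectivity of G(B;A) with m > 1 yields, for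
  each b, some z \<in> A - B with z_b \<noteq> 0, so a nonzero such vertex w would violate
  |[z, w]_B| \<le> 1/2.\<close>

lemma interior_Inter_halfspaces:
  fixes a :: "'k \<Rightarrow> 'a::euclidean_space"
  assumes "finite K" and "\<forall>k\<in>K. a k \<bullet> x < \<beta> k"
  shows "x \<in> interior (\<Inter>k\<in>K. {y. a k \<bullet> y \<le> \<beta> k})"
proof (rule interiorI)
  show "open (\<Inter>k\<in>K. {y. a k \<bullet> y < \<beta> k})"
    using assms(1) by (intro open_INT) (auto intro: open_halfspace_lt)
qed (use assms(2) in \<open>auto intro: less_imp_le\<close>)

lemma facet_of_Inter_halfspaces:
  fixes a :: "'k \<Rightarrow> 'a::euclidean_space"
  assumes K: "finite K" and C: "C = (\<Inter>k\<in>K. {x. a k \<bullet> x \<le> \<beta> k})"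
    and a: "\<forall>k\<in>K. a k \<noteq> 0" and int: "interior C \<noteq> {}" and F: "F facet_of C"
  obtains k where "k \<in> K" and "F = C \<inter> {x. a k \<bullet> x = \<beta> k}"
proof -
  have "convex C" unfolding C by (intro convex_INT) (auto intro: convex_halfspace_le)
  have "F face_of C" "F \<noteq> {}" "F \<noteq> C" and dimF: "aff_dim F = int DIM('a) - 1"
    using F aff_dim_nonempty_interior[OF int] by (auto simp: facet_of_def)
  then obtain x where x: "x \<in> rel_interior F"
    using face_of_imp_convex rel_interior_eq_empty by blast
  have "x \<in> C" using x rel_interior_subset face_of_imp_subset[OF \<open>F face_of C\<close>] by blast
  moreover have "x \<notin> interior C"
    using x face_of_disjoint_interior[OF \<open>F face_of C\<close> \<open>F \<noteq> C\<close>] rel_interior_subset by blast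
  ultimately obtain k where k: "k \<in> K" and tight: "a k \<bullet> x = \<beta> k"
    using interior_Inter_halfspaces[OF K, of a x \<beta>] unfolding C by force
  define G where "G = C \<inter> {x. a k \<bullet> x = \<beta> k}"
  have "G face_of C"
    unfolding G_def using \<open>convex C\<close> k C by (intro face_of_Int_supporting_hyperplane_le) auto
  moreover have "F \<subseteq> G"
    using subset_of_face_of[OF \<open>G face_of C\<close> face_of_imp_subset[OF \<open>F face_of C\<close>]] x tight
      \<open>x \<in> C\<close> unfolding G_def by blast
  ultimately have "F face_of G" using \<open>F face_of C\<close> face_of_face by blast
  have "aff_dim G \<le> aff_dim {x. a k \<bullet> x = \<beta> k}"
    unfolding G_def by (intro aff_dim_subset) auto
  also have "\<dots> = aff_dim F" using a k dimF by (simp add: aff_dim_hyperplane)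
  finally have "F = G"
    using face_of_aff_dim_lt[OF face_of_imp_convex[OF \<open>G face_of C\<close>] \<open>F face_of G\<close>] by force
  then show ?thesis using that k unfolding G_def by blast
qed

lemma facet_of_Inter_halfspacesI:
  fixes a :: "'k \<Rightarrow> 'a::euclidean_space"
  assumes K: "finite K" and C: "C = (\<Inter>k\<in>K. {x. a k \<bullet> x \<le> \<beta> k})"
    and a: "\<forall>k\<in>K. a k \<noteq> 0" and int: "interior C \<noteq> {}"
    and j: "j \<in> K" and q: "q \<in> C" "a j \<bullet> q = \<beta> j"
    and strict: "\<forall>k\<in>K - {j}. a k \<bullet> q < \<beta> k"
  shows "(C \<inter> {x. a j \<bullet> x = \<beta> j}) facet_of C"
proof -
  have "polyhedron C"
    unfolding C using K by (intro polyhedron_Inter) (auto intro: polyhedron_halfspace_le)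
  have "C \<inter> {x. a j \<bullet> x = \<beta> j} face_of C"
    using polyhedron_imp_convex[OF \<open>polyhedron C\<close>] j C
    by (intro face_of_Int_supporting_hyperplane_le) auto
  moreover have "C \<inter> {x. a j \<bullet> x = \<beta> j} \<noteq> C"
  proof
    assume "C \<inter> {x. a j \<bullet> x = \<beta> j} = C"
    then have "interior C \<subseteq> interior {x. a j \<bullet> x = \<beta> j}" by (metis inf.orderI interior_mono)
    with int a j show False by simp
  qed
  ultimately obtain F where F: "F facet_of C" "C \<inter> {x. a j \<bullet> x = \<beta> j} \<subseteq> F"
    using face_of_polyhedron_subset_facet[OF \<open>polyhedron C\<close>] q by blast
  then obtain k where k: "k \<in> K" "F = C \<inter> {x. a k \<bullet> x = \<beta> k}"
    using facet_of_Inter_halfspaces[OF K C a int] by blast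
  have "q \<in> F" using F(2) q by blast
  then have "k = j" using k q strict by (metis DiffI IntD2 less_irrefl mem_Collect_eq singletonD)
  then show ?thesis using F k by simp
qed

lemma affine_hull_facet_in_hyperplane:
  fixes C :: "'a::euclidean_space set"
  assumes "interior C \<noteq> {}" and "F facet_of C" and "F \<subseteq> {x. a \<bullet> x = \<beta>}" and "a \<noteq> 0"
  shows "affine hull F = {x. a \<bullet> x = \<beta>}"
proof (rule affine_dim_equal)
  show "affine hull F \<subseteq> {x. a \<bullet> x = \<beta>}"
    using assms(3) by (intro hull_minimal) (auto simp: affine_hyperplane)
  show "aff_dim (affine hull F) = aff_dim {x. a \<bullet> x = \<beta>}"
    using assms aff_dim_nonempty_interior[OF assms(1)] by (simp add: facet_of_def)
  show "affine hull F \<noteq> {}" using assms(2) by (simp add: facet_of_def)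
qed (auto simp: affine_hyperplane)

lemma hyperplane_subset_hyperplane_imp_parallel:
  fixes a :: "'a::real_inner"
  assumes "a \<noteq> 0" and sub: "{x. a \<bullet> x = \<beta>} \<subseteq> {x. a' \<bullet> x = \<beta>'}"
  shows "\<exists>r. a' = r *\<^sub>R a"
proof -
  define x0 where "x0 = (\<beta> / (a \<bullet> a)) *\<^sub>R a"
  define y where "y = a' - ((a' \<bullet> a) / (a \<bullet> a)) *\<^sub>R a"
  have "a \<bullet> x0 = \<beta>" and ay: "a \<bullet> y = 0"
    using assms(1) by (simp_all add: x0_def y_def inner_diff_right inner_commute)
  then have "x0 \<in> {x. a \<bullet> x = \<beta>}" "x0 + y \<in> {x. a \<bullet> x = \<beta>}"
    by (simp_all add: inner_add_right)
  then have "a' \<bullet> x0 = \<beta>'" "a' \<bullet> (x0 + y) = \<beta>'" using sub by blast+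
  then have "a' \<bullet> y = 0" by (simp add: inner_add_right)
  then have "y \<bullet> y = 0" using ay by (simp add: y_def inner_diff_left inner_commute)
  then have "a' = ((a' \<bullet> a) / (a \<bullet> a)) *\<^sub>R a" by (simp add: y_def)
  then show ?thesis ..
qed

definition generic_weights :: "'b set \<Rightarrow> ('b \<Rightarrow> real) set \<Rightarrow> ('b \<Rightarrow> real) \<Rightarrow> bool" where
  "generic_weights B Z t \<longleftrightarrow> (\<forall>b\<in>B. t b > 0) \<and>
     (\<forall>S\<subseteq>B. S \<noteq> {} \<longrightarrow> (\<exists>b\<in>S. \<forall>z\<in>Z. z b \<noteq> 0 \<longrightarrow> 1 \<le> \<bar>\<Sum>x\<in>S. z x * t x\<bar>))"

lemma abs_sum_ge_1_if_dominant:
  fixes f :: "'b \<Rightarrow> real"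
  assumes "finite S" and "b \<in> S" and "1 + (\<Sum>x\<in>S - {b}. \<bar>f x\<bar>) \<le> \<bar>f b\<bar>"
  shows "1 \<le> \<bar>\<Sum>x\<in>S. f x\<bar>"
proof -
  have "\<bar>\<Sum>x\<in>S - {b}. f x\<bar> \<le> (\<Sum>x\<in>S - {b}. \<bar>f x\<bar>)" by (rule sum_abs)
  then show ?thesis using sum.remove[OF assms(1,2), of f] assms(3) by linarith
qed

text \<open>Induction on B: the weight of a new element b is chosen so large that z b * t b
  dominates all other terms whenever z b \<noteq> 0.\<close>
lemma generic_weights_exist:
  assumes "finite B" and "finite Z"
  shows "\<exists>t. generic_weights B Z t"
  using assms(1)
proof (induction B rule: finite_induct)
  case empty
  then show ?case by (simp add: generic_weights_def)
next
  case (insert b B)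
  then obtain t where t: "generic_weights B Z t" by blast
  define R where "R z = 1 + (\<Sum>x\<in>B. \<bar>z x * t x\<bar>)" for z
  define T where "T = 1 + (\<Sum>z\<in>Z. R z / \<bar>z b\<bar>)"
  have R_pos: "R z > 0" for z unfolding R_def by (simp add: sum_nonneg add_pos_nonneg)
  have T_pos: "T > 0"
    unfolding T_def using R_pos by (simp add: sum_nonneg add_pos_nonneg less_imp_le)
  have R_le: "R z \<le> \<bar>z b\<bar> * T" if "z \<in> Z" "z b \<noteq> 0" for z
  proof -
    have "R z / \<bar>z b\<bar> \<le> T"
      using member_le_sum[OF that(1), of "\<lambda>z. R z / \<bar>z b\<bar>"] assms(2) R_pos
      unfolding T_def by (simp add: less_imp_le)
    then show ?thesis using that(2) by (simp add: divide_le_eq mult.commute)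
  qed
  define t' where "t' = t(b := T)"
  have sum_t': "(\<Sum>x\<in>S. f x * t' x) = (\<Sum>x\<in>S. f x * t x)" if "S \<subseteq> B" for S f
    using that insert(2) unfolding t'_def by (intro sum.cong) auto
  have "\<exists>y\<in>S. \<forall>z\<in>Z. z y \<noteq> 0 \<longrightarrow> 1 \<le> \<bar>\<Sum>x\<in>S. z x * t' x\<bar>"
    if S: "S \<subseteq> insert b B" "S \<noteq> {}" for S
  proof (cases "b \<in> S")
    case False
    then have "S \<subseteq> B" using S by auto
    then obtain y where "y \<in> S" "\<forall>z\<in>Z. z y \<noteq> 0 \<longrightarrow> 1 \<le> \<bar>\<Sum>x\<in>S. z x * t x\<bar>"
      using t S(2) unfolding generic_weights_def by blast
    then show ?thesis using sum_t'[OF \<open>S \<subseteq> B\<close>] by auto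
  next
    case True
    have "1 \<le> \<bar>\<Sum>x\<in>S. z x * t' x\<bar>" if z: "z \<in> Z" "z b \<noteq> 0" for z
    proof (rule abs_sum_ge_1_if_dominant[OF _ True])
      show "finite S" using S insert(1) finite_subset by blast
      have "(\<Sum>x\<in>S - {b}. \<bar>z x * t' x\<bar>) = (\<Sum>x\<in>S - {b}. \<bar>z x * t x\<bar>)"
        using S insert(2) unfolding t'_def by (intro sum.cong) auto
      also have "\<dots> \<le> (\<Sum>x\<in>B. \<bar>z x * t x\<bar>)"
        using S insert(1) by (intro sum_mono2) auto
      finally show "1 + (\<Sum>x\<in>S - {b}. \<bar>z x * t' x\<bar>) \<le> \<bar>z b * t' b\<bar>"
        using R_le[OF z] T_pos unfolding R_def by (simp add: t'_def abs_mult)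
    qed
    then show ?thesis using True by blast
  qed
  moreover have "\<forall>x\<in>insert b B. 0 < t' x"
    using t T_pos unfolding t'_def generic_weights_def by auto
  ultimately show ?case unfolding generic_weights_def by blast
qed

locale coordinate_basis =
  fixes B :: "'a::euclidean_space set"
  assumes independent_B: "independent B" and span_B: "span B = UNIV"
begin

lemma finite_B: "finite B"
  using independent_B by (rule finiteI_independent)

lemma card_B: "card B = DIM('a)"
  using basis_card_eq_dim[of B UNIV] independent_B span_B by (simp add: dim_UNIV)

lemma linear_representation: "linear (\<lambda>x. representation B x b)"
  by (rule linearI) (use independent_B span_B in \<open>auto simp: representation_add representation_scale\<close>)

lemma representation_sum_scaleR: "b \<in> B \<Longrightarrow> representation B (\<Sum>b\<in>B. f b *\<^sub>R b) b = f b"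
proof -
  assume b: "b \<in> B"
  have "representation B (\<Sum>b'\<in>B. f b' *\<^sub>R b') b = (\<Sum>b'\<in>B. f b' * representation B b' b)"
    using linear_sum[OF linear_representation, of "\<lambda>b'. f b' *\<^sub>R b'" B]
      linear_cmul[OF linear_representation] by simp
  also have "\<dots> = (\<Sum>b'\<in>B. if b' = b then f b else 0)"
    by (intro sum.cong) (auto simp: representation_basis[OF independent_B])
  also have "\<dots> = f b" using b finite_B by simp
  finally show ?thesis .
qed

lemma representation_inject:
  assumes "\<And>b. b \<in> B \<Longrightarrow> representation B x b = representation B y b"
  shows "x = y"
proof -
  have "x = (\<Sum>b\<in>B. representation B x b *\<^sub>R b)" "y = (\<Sum>b\<in>B. representation B y b *\<^sub>R b)"
    using sum_representation_eq[OF independent_B _ finite_B] span_B by auto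
  then show ?thesis using assms by (metis (no_types, lifting) sum.cong)
qed

lemma inner_B_basis: "b \<in> B \<Longrightarrow> inner_B B b x = representation B x b"
proof -
  assume b: "b \<in> B"
  have "inner_B B b x = (\<Sum>b'\<in>B. if b' = b then representation B x b else 0)"
    unfolding inner_B_def by (intro sum.cong) (auto simp: representation_basis[OF independent_B b])
  then show ?thesis using b finite_B by simp
qed

lemma inner_B_commute: "inner_B B x y = inner_B B y x"
  unfolding inner_B_def by (simp add: mult.commute)

definition dual :: "'a \<Rightarrow> 'a" where
  "dual u = adjoint (inner_B B u) 1"

lemma inner_dual: "dual u \<bullet> x = inner_B B u x"
proof -
  have "linear (inner_B B u)"
    unfolding inner_B_def
    by (rule linearI) (simp_all add: linear_add[OF linear_representation]
        linear_cmul[OF linear_representation] sum.distrib algebra_simps sum_distrib_left)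
  from adjoint_works[OF this, of x 1] show ?thesis by (simp add: dual_def inner_commute)
qed

lemma dual_eq_scaleR_dual:
  assumes "dual v = c *\<^sub>R dual u"
  shows "v = c *\<^sub>R u"
proof (rule representation_inject)
  fix b assume b: "b \<in> B"
  have "representation B v b = dual v \<bullet> b"
    using inner_B_basis[OF b] inner_B_commute inner_dual by metis
  also have "\<dots> = c * (dual u \<bullet> b)" using assms by simp
  also have "dual u \<bullet> b = representation B u b"
    using inner_B_basis[OF b] inner_B_commute inner_dual by metis
  finally show "representation B v b = representation B (c *\<^sub>R u) b"
    using linear_cmul[OF linear_representation] by simp
qed

lemma dual_eq_0_iff [simp]: "dual u = 0 \<longleftrightarrow> u = 0"
proof
  show "dual u = 0 \<Longrightarrow> u = 0" using dual_eq_scaleR_dual[of u 0 u] by simp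
  show "u = 0 \<Longrightarrow> dual u = 0"
    using inner_dual[of 0 "dual 0"]
    by (simp add: inner_B_def linear_0[OF linear_representation])
qed

lemma B_nonempty: "B \<noteq> {}"
  using card_B by auto

lemma G_connected_imp_neighbour:
  assumes "G_connected B A" and "DIM('a) > 1" and b: "b \<in> B"
  obtains z where "z \<in> A - B" and "representation B z b \<noteq> 0"
proof -
  obtain b' where b': "b' \<in> B" "b' \<noteq> b"
    using card_B assms(2) card_mono[of "{b}" B] by fastforce
  have "(G_edge B A)\<^sup>*\<^sup>* b b'" using assms(1) b b' unfolding G_connected_def by blast
  then obtain y where "G_edge B A b y"
    using b' by (cases rule: converse_rtranclpE) auto
  then show ?thesis using that inner_B_basis[OF b] unfolding G_edge_def by auto
qed

end

locale box_polytope = coordinate_basis B for B :: "'a::euclidean_space set" +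
  fixes A :: "'a set" and t :: "'a \<Rightarrow> real"
  assumes finite_A: "finite A" and B_subset_A: "B \<subseteq> A" and zero_notin_A: "0 \<notin> A"
    and t_pos: "b \<in> B \<Longrightarrow> t b > 0"
begin

definition C :: "'a set" where
  "C = {x. (\<forall>b\<in>B. 0 \<le> representation B x b \<and> representation B x b \<le> t b) \<and>
           (\<forall>z\<in>A - B. \<bar>inner_B B z x\<bar> \<le> 1/2)}"

text \<open>The constraint (u, True) is the upper and (u, False) the lower bound on [u, x]_B.\<close>
definition constraints :: "('a \<times> bool) set" where
  "constraints = A \<times> UNIV"

fun constraint_normal :: "'a \<times> bool \<Rightarrow> 'a" where
  "constraint_normal (u, s) = (if s then dual u else - dual u)"

fun constraint_bound :: "'a \<times> bool \<Rightarrow> real" where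
  "constraint_bound (u, s) = (if u \<in> B then (if s then t u else 0) else 1/2)"

lemma finite_constraints: "finite constraints"
  using finite_A by (simp add: constraints_def)

lemma constraint_normal_nonzero: "k \<in> constraints \<Longrightarrow> constraint_normal k \<noteq> 0"
  using zero_notin_A by (cases k) (auto simp: constraints_def)

lemma C_eq_Inter_halfspaces:
  "C = (\<Inter>k\<in>constraints. {x. constraint_normal k \<bullet> x \<le> constraint_bound k})"
proof -
  have "\<bar>r\<bar> \<le> 1/2 \<longleftrightarrow> r \<le> 1/2 \<and> - r \<le> 1/2" for r :: real by linarith
  then show ?thesis
    using B_subset_A
    by (auto simp: C_def constraints_def inner_dual inner_B_basis all_bool_eq split: if_splits)
qed

lemma constraint_hyperplane_basis:
  "b \<in> B \<Longrightarrow> {x. constraint_normal (b, s) \<bullet> x = constraint_bound (b, s)} =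
     {x. representation B x b = (if s then t b else 0)}"
  by (auto simp: inner_dual inner_B_basis)

definition margin :: real where
  "margin = min (Min (t ` B) / 2) (1 / (2 * (1 + (\<Sum>z\<in>A - B. \<Sum>b\<in>B. \<bar>representation B z b\<bar>))))"

lemma margin_pos: "margin > 0"
  using t_pos finite_B B_nonempty by (simp add: margin_def sum_nonneg add_pos_nonneg)

lemma margin_less_t: "b \<in> B \<Longrightarrow> margin < t b"
  using Min_le[OF finite_imageI[OF finite_B], of "t b" t] t_pos finite_B B_nonempty
  by (fastforce simp: margin_def min_less_iff_disj Min_gr_iff)

lemma inner_B_small:
  assumes z: "z \<in> A - B" and x: "\<And>b. b \<in> B \<Longrightarrow> \<bar>representation B x b\<bar> \<le> margin"
  shows "\<bar>inner_B B z x\<bar> < 1/2"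
proof -
  define M where "M = 1 + (\<Sum>z\<in>A - B. \<Sum>b\<in>B. \<bar>representation B z b\<bar>)"
  have "(\<Sum>b\<in>B. \<bar>representation B z b\<bar>) < M"
    using member_le_sum[OF z, of "\<lambda>z. \<Sum>b\<in>B. \<bar>representation B z b\<bar>"] finite_A
    by (simp add: M_def sum_nonneg)
  have "\<bar>inner_B B z x\<bar> \<le> (\<Sum>b\<in>B. \<bar>representation B z b\<bar> * \<bar>representation B x b\<bar>)"
    unfolding inner_B_def using sum_abs by (metis (no_types, lifting) abs_mult sum.cong)
  also have "\<dots> \<le> (\<Sum>b\<in>B. \<bar>representation B z b\<bar>) * margin"
    using x by (simp add: sum_distrib_right sum_mono mult_left_mono)
  also have "\<dots> < M * margin"
    using \<open>(\<Sum>b\<in>B. \<bar>representation B z b\<bar>) < M\<close> margin_pos by simp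
  also have "\<dots> \<le> 1/2"
  proof -
    have "M > 0" by (simp add: M_def sum_nonneg add_pos_nonneg)
    moreover have "margin \<le> 1 / (2 * M)" unfolding margin_def M_def by simp
    ultimately show ?thesis by (simp add: field_simps)
  qed
  finally show ?thesis .
qed

definition box_point :: "('a \<Rightarrow> real) \<Rightarrow> 'a" where
  "box_point f = (\<Sum>b\<in>B. f b *\<^sub>R b)"

lemma representation_box_point: "b \<in> B \<Longrightarrow> representation B (box_point f) b = f b"
  unfolding box_point_def by (rule representation_sum_scaleR)

lemma box_point_in_C:
  assumes "\<And>b. b \<in> B \<Longrightarrow> 0 \<le> f b \<and> f b \<le> margin"
  shows "box_point f \<in> C"
  using assms margin_less_t inner_B_small[of _ "box_point f"]
  by (fastforce simp: C_def representation_box_point)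

lemma box_point_strict_constraint:
  assumes f: "\<And>b. b \<in> B \<Longrightarrow> 0 \<le> f b \<and> f b \<le> margin" and k: "k \<in> constraints"
    and not_tight: "\<And>b. k = (b, False) \<Longrightarrow> f b \<noteq> 0"
  shows "constraint_normal k \<bullet> box_point f < constraint_bound k"
proof -
  obtain u s where us: "k = (u, s)" "u \<in> A" using k by (auto simp: constraints_def)
  show ?thesis
  proof (cases "u \<in> B")
    case True
    then show ?thesis
      using f[OF True] margin_less_t[OF True] not_tight[of u]
      by (cases s) (auto simp: us inner_dual inner_B_basis representation_box_point)
  next
    case False
    then have "\<bar>inner_B B u (box_point f)\<bar> < 1/2"
      using us f by (intro inner_B_small) (auto simp: representation_box_point)
    then show ?thesis using False by (auto simp: us inner_dual)
  qed
qed

lemma interior_C_nonempty: "interior C \<noteq> {}"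
proof -
  have "box_point (\<lambda>_. margin) \<in> interior C"
    unfolding C_eq_Inter_halfspaces using finite_constraints margin_pos
    by (intro interior_Inter_halfspaces ballI box_point_strict_constraint) auto
  then show ?thesis by blast
qed

lemma bounded_C: "bounded C"
proof -
  have "norm x \<le> (\<Sum>b\<in>B. t b * norm b)" if "x \<in> C" for x
  proof -
    have "norm x = norm (\<Sum>b\<in>B. representation B x b *\<^sub>R b)"
      using sum_representation_eq[OF independent_B _ finite_B] span_B by auto
    also have "\<dots> \<le> (\<Sum>b\<in>B. norm (representation B x b *\<^sub>R b))" by (rule norm_sum)
    also have "\<dots> \<le> (\<Sum>b\<in>B. t b * norm b)"
      using that unfolding C_def by (intro sum_mono) (auto intro: mult_right_mono)
    finally show ?thesis .
  qed
  then show ?thesis unfolding bounded_iff by blast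
qed

lemma polytope_C: "polytope C"
proof -
  have "polyhedron C"
    unfolding C_eq_Inter_halfspaces using finite_constraints
    by (intro polyhedron_Inter) (auto intro: polyhedron_halfspace_le)
  then show ?thesis using bounded_C by (simp add: polytope_eq_bounded_polyhedron)
qed

lemma facet_of_CE:
  assumes "F facet_of C"
  obtains k where "k \<in> constraints" and "F = C \<inter> {x. constraint_normal k \<bullet> x = constraint_bound k}"
  using facet_of_Inter_halfspaces[OF finite_constraints C_eq_Inter_halfspaces _ interior_C_nonempty assms]
    constraint_normal_nonzero by blast

lemma coordinate_facet:
  assumes b: "b \<in> B"
  shows "(C \<inter> {x. representation B x b = 0}) facet_of C"
proof -
  define f where "f b' = (if b' = b then 0 else margin)" for b'
  have f: "0 \<le> f b' \<and> f b' \<le> margin" for b' using margin_pos by (simp add: f_def)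
  have "(C \<inter> {x. constraint_normal (b, False) \<bullet> x = constraint_bound (b, False)}) facet_of C"
  proof (rule facet_of_Inter_halfspacesI[OF finite_constraints C_eq_Inter_halfspaces])
    show "\<forall>k\<in>constraints. constraint_normal k \<noteq> 0" using constraint_normal_nonzero by blast
    show "(b, False) \<in> constraints" using b B_subset_A by (auto simp: constraints_def)
    show "box_point f \<in> C" using f by (intro box_point_in_C) auto
    show "constraint_normal (b, False) \<bullet> box_point f = constraint_bound (b, False)"
      using b by (simp add: inner_dual inner_B_basis representation_box_point f_def)
    show "\<forall>k\<in>constraints - {(b, False)}. constraint_normal k \<bullet> box_point f < constraint_bound k"
      using f margin_pos by (intro ballI box_point_strict_constraint) (auto simp: f_def)
  qed (rule interior_C_nonempty)
  then show ?thesis using constraint_hyperplane_basis[OF b, of False] by simp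
qed

lemma zero_in_C: "0 \<in> C"
  using t_pos by (simp add: C_def representation_zero inner_B_def less_imp_le)

lemma facets_containing_0:
  "{F. F facet_of C \<and> 0 \<in> F} = (\<lambda>b. C \<inter> {x. representation B x b = 0}) ` B"
proof (intro equalityI subsetI)
  fix F assume "F \<in> {F. F facet_of C \<and> 0 \<in> F}"
  then have F: "F facet_of C" "0 \<in> F" by auto
  then obtain u s where us: "(u, s) \<in> constraints"
    and F_eq: "F = C \<inter> {x. constraint_normal (u, s) \<bullet> x = constraint_bound (u, s)}"
    by (metis facet_of_CE surj_pair)
  then have "constraint_bound (u, s) = 0" using F(2) by simp
  then have "u \<in> B" "\<not> s" using t_pos by (auto split: if_splits simp: less_le)
  then show "F \<in> (\<lambda>b. C \<inter> {x. representation B x b = 0}) ` B"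
    using F_eq constraint_hyperplane_basis[of u s] by auto
next
  fix F assume "F \<in> (\<lambda>b. C \<inter> {x. representation B x b = 0}) ` B"
  then show "F \<in> {F. F facet_of C \<and> 0 \<in> F}"
    using coordinate_facet zero_in_C by (auto simp: representation_zero)
qed

lemma card_facets_containing_0: "card {F. F facet_of C \<and> 0 \<in> F} = DIM('a)"
proof -
  have "inj_on (\<lambda>b. C \<inter> {x. representation B x b = 0}) B"
  proof (rule inj_onI)
    fix b1 b2 assume b: "b1 \<in> B" "b2 \<in> B"
      and eq: "C \<inter> {x. representation B x b1 = 0} = C \<inter> {x. representation B x b2 = 0}"
    define q where "q = box_point (\<lambda>b'. if b' = b1 then 0 else margin)"
    have "q \<in> C \<inter> {x. representation B x b1 = 0}"
      using b margin_pos by (auto simp: q_def representation_box_point intro!: box_point_in_C)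
    then show "b1 = b2"
      using eq b margin_pos by (auto simp: q_def representation_box_point split: if_splits)
  qed
  then show ?thesis by (simp add: facets_containing_0 card_image card_B)
qed

lemma extreme_point_0: "0 extreme_point_of C"
  unfolding extreme_point_of_def
proof (intro conjI ballI zero_in_C notI)
  fix x y assume x: "x \<in> C" and y: "y \<in> C" and "0 \<in> open_segment x y"
  then obtain u where "x \<noteq> y" "0 < u" "u < 1" and zero: "(1 - u) *\<^sub>R x + u *\<^sub>R y = 0"
    unfolding in_segment by auto
  have "representation B x b = 0 \<and> representation B y b = 0" if b: "b \<in> B" for b
  proof -
    have "(1 - u) * representation B x b + u * representation B y b = 0"
      using arg_cong[OF zero, of "\<lambda>v. representation B v b"]
      by (simp add: linear_add[OF linear_representation] linear_cmul[OF linear_representation]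
          representation_zero)
    moreover have "0 \<le> representation B x b" "0 \<le> representation B y b"
      using x y b by (auto simp: C_def)
    ultimately show ?thesis using \<open>0 < u\<close> \<open>u < 1\<close>
      by (smt (verit) mult_pos_pos mult_nonneg_nonneg)
  qed
  then have "x = y" by (intro representation_inject) simp
  with \<open>x \<noteq> y\<close> show False ..
qed

lemma good_vertex_0: "good_vertex B C 0"
  unfolding good_vertex_def
proof (intro conjI extreme_point_0 card_facets_containing_0 allI impI)
  fix F assume "F facet_of C \<and> 0 \<in> F"
  then obtain b where b: "b \<in> B" and F: "F = C \<inter> {x. representation B x b = 0}"
    using facets_containing_0 by blast
  then have "normal_to B F b"
    using B_subset_A zero_notin_A by (auto simp: normal_to_def inner_B_basis)
  then show "\<exists>b\<in>B. normal_to B F b" using b by blast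
qed

lemma facet_normal_in_A:
  assumes "F facet_of C"
  shows "\<exists>a\<in>A. normal_to B F a"
proof -
  obtain u s where us: "(u, s) \<in> constraints"
    and F: "F = C \<inter> {x. constraint_normal (u, s) \<bullet> x = constraint_bound (u, s)}"
    by (metis assms facet_of_CE surj_pair)
  then have "F \<subseteq> {x. inner_B B u x = (if s then 1 else -1) * constraint_bound (u, s)}"
    by (auto simp: inner_dual[symmetric])
  moreover have "u \<in> A" "u \<noteq> 0" using us zero_notin_A by (auto simp: constraints_def)
  ultimately have "normal_to B F u" unfolding normal_to_def by blast
  then show ?thesis using \<open>u \<in> A\<close> by blast
qed

lemma facet_normal_to_basis:
  assumes A: "no_two_parallel A" and F: "F facet_of C" and b: "b \<in> B" and "normal_to B F b"
  shows "F = C \<inter> {x. representation B x b = 0} \<or> F = C \<inter> {x. representation B x b = t b}"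
proof -
  obtain u s where us: "(u, s) \<in> constraints"
    and F_eq: "F = C \<inter> {x. constraint_normal (u, s) \<bullet> x = constraint_bound (u, s)}"
    by (metis F facet_of_CE surj_pair)
  obtain c where "F \<subseteq> {x. dual b \<bullet> x = c}"
    using \<open>normal_to B F b\<close> by (auto simp: normal_to_def inner_dual[symmetric])
  then have "affine hull F \<subseteq> {x. dual b \<bullet> x = c}"
    by (intro hull_minimal) (auto simp: affine_hyperplane)
  moreover have "affine hull F = {x. constraint_normal (u, s) \<bullet> x = constraint_bound (u, s)}"
    using F_eq constraint_normal_nonzero[OF us]
    by (intro affine_hull_facet_in_hyperplane[OF interior_C_nonempty F]) auto
  ultimately have "{x. constraint_normal (u, s) \<bullet> x = constraint_bound (u, s)} \<subseteq> {x. dual b \<bullet> x = c}"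
    by simp
  then obtain r where "dual b = r *\<^sub>R constraint_normal (u, s)"
    using hyperplane_subset_hyperplane_imp_parallel[OF constraint_normal_nonzero[OF us]] by blast
  then have "dual b = (if s then r else - r) *\<^sub>R dual u" by (cases s) auto
  then have "b = (if s then r else - r) *\<^sub>R u" by (rule dual_eq_scaleR_dual)
  moreover have "u \<in> A" "b \<in> A" using us b B_subset_A by (auto simp: constraints_def)
  ultimately have "u = b" using A unfolding no_two_parallel_def by blast
  then show ?thesis using F_eq constraint_hyperplane_basis[OF b, of s] by (cases s) auto
qed

lemma good_vertex_coordinates:
  assumes "no_two_parallel A" and w: "good_vertex B C w" and b: "b \<in> B"
  shows "representation B w b = 0 \<or> representation B w b = t b"
proof -
  define W where "W = {F. F facet_of C \<and> w \<in> F}"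
  have card_W: "card W = DIM('a)" and normal_W: "\<And>F. F \<in> W \<Longrightarrow> \<exists>b\<in>B. normal_to B F b"
    using w unfolding good_vertex_def W_def by auto
  define g where "g F = (SOME b. b \<in> B \<and> normal_to B F b)" for F
  have g: "g F \<in> B \<and> normal_to B F (g F)" if "F \<in> W" for F
    using normal_W[OF that] unfolding g_def Bex_def by (rule someI_ex)
  have coord_g: "representation B w (g F) = 0 \<or> representation B w (g F) = t (g F)"
    and W_eq: "F = C \<inter> {x. representation B x (g F) = representation B w (g F)}"
    if F: "F \<in> W" for F
  proof -
    have "F facet_of C" "w \<in> F" using F by (auto simp: W_def)
    then have "F = C \<inter> {x. representation B x (g F) = 0} \<or>
        F = C \<inter> {x. representation B x (g F) = t (g F)}"
      using g[OF F] by (intro facet_normal_to_basis[OF assms(1)]) auto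
    then obtain c where c: "c = 0 \<or> c = t (g F)" and F_eq: "F = C \<inter> {x. representation B x (g F) = c}"
      by blast
    moreover have "representation B w (g F) = c" using \<open>w \<in> F\<close> F_eq by blast
    ultimately show "representation B w (g F) = 0 \<or> representation B w (g F) = t (g F)"
      and "F = C \<inter> {x. representation B x (g F) = representation B w (g F)}" by simp_all
  qed
  have "inj_on g W"
  proof (rule inj_onI)
    fix F1 F2 assume "F1 \<in> W" "F2 \<in> W" "g F1 = g F2"
    then show "F1 = F2" using W_eq[of F1] W_eq[of F2] by simp
  qed
  moreover have "finite W" using card_W by (intro card_ge_0_finite) simp
  ultimately have "card (g ` W) = card B" by (simp add: card_image card_W card_B)
  then have "g ` W = B" using g by (intro card_subset_eq[OF finite_B]) auto
  then show ?thesis using b coord_g by blast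
qed

lemma box_corner_in_C_eq_0:
  assumes generic: "generic_weights B (representation B ` (A - B)) t"
    and neighbour: "\<And>b. b \<in> B \<Longrightarrow> \<exists>z\<in>A - B. representation B z b \<noteq> 0"
    and w: "w \<in> C" and coords: "\<And>b. b \<in> B \<Longrightarrow> representation B w b \<in> {0, t b}"
  shows "w = 0"
proof (rule ccontr)
  assume "w \<noteq> 0"
  define S where "S = {b \<in> B. representation B w b \<noteq> 0}"
  have "S \<subseteq> B" by (auto simp: S_def)
  moreover have "S \<noteq> {}"
    using \<open>w \<noteq> 0\<close> representation_inject[of w 0] by (auto simp: S_def representation_zero)
  ultimately obtain b where "b \<in> S" and b: "\<forall>z\<in>representation B ` (A - B).
      z b \<noteq> 0 \<longrightarrow> 1 \<le> \<bar>\<Sum>x\<in>S. z x * t x\<bar>"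
    using generic unfolding generic_weights_def by blast
  obtain z where z: "z \<in> A - B" and "representation B z b \<noteq> 0"
    using neighbour \<open>b \<in> S\<close> \<open>S \<subseteq> B\<close> by blast
  then have "1 \<le> \<bar>\<Sum>x\<in>S. representation B z x * t x\<bar>" using b by blast
  also have "(\<Sum>x\<in>S. representation B z x * t x) = inner_B B z w"
  proof -
    have "representation B w x = t x" if "x \<in> S" for x
      using coords[of x] that by (auto simp: S_def)
    then have "(\<Sum>x\<in>S. representation B z x * t x) =
        (\<Sum>x\<in>S. representation B z x * representation B w x)" by simp
    also have "\<dots> = inner_B B z w"
      unfolding inner_B_def using finite_B by (intro sum.mono_neutral_left) (auto simp: S_def)
    finally show ?thesis .
  qed
  also have "\<bar>inner_B B z w\<bar> \<le> 1/2" using w z by (auto simp: C_def)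
  finally show False by simp
qed

end

theorem mainTheorem11:
  fixes A B :: "'a::euclidean_space set"
  assumes "DIM('a) > 1"
    and "finite A" and "span A = UNIV" and "0 \<notin> A" and "no_two_parallel A"
    and "B \<subseteq> A" and "independent B" and "span B = UNIV"
    and "G_connected B A"
  shows "\<exists>C::'a set. polytope C \<and> compact C \<and> convex C \<and> interior C \<noteq> {} \<and>
           (\<forall>F. F facet_of C \<longrightarrow> (\<exists>a\<in>A. normal_to B F a)) \<and>
           (\<exists>v. good_vertex B C v \<and> (\<forall>w. good_vertex B C w \<longrightarrow> w = v))"
proof -
  interpret coordinate_basis B using assms(7,8) by unfold_locales
  obtain t where t: "generic_weights B (representation B ` (A - B)) t"
    using generic_weights_exist[OF finite_B finite_imageI[OF finite_Diff[OF assms(2)]]] by blast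
  interpret box_polytope B A t
    using assms(2,4,6) t by unfold_locales (simp_all add: generic_weights_def)
  have "w = 0" if "good_vertex B C w" for w
  proof (rule box_corner_in_C_eq_0[OF t])
    show "\<exists>z\<in>A - B. representation B z b \<noteq> 0" if "b \<in> B" for b
      using G_connected_imp_neighbour[OF assms(9,1) that] by blast
    show "w \<in> C" using that by (simp add: good_vertex_def extreme_point_of_def)
    show "representation B w b \<in> {0, t b}" if "b \<in> B" for b
      using good_vertex_coordinates[OF assms(5) \<open>good_vertex B C w\<close> that] by blast
  qed
  then show ?thesis
    using polytope_C polytope_imp_compact polytope_imp_convex interior_C_nonempty
      facet_normal_in_A good_vertex_0 by blast
qed

end
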